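(* Under the standing setting and the multilevel parametrization assumption described in the context (with parameters $m$ and $\alpha>0$), define for $M\in\mathbb{N}_0$ $$e_M:=\Big\|\sum_{j>M}\mathbf{A}_j\otimes\mathbf{M}_j\Big\|_{\ell^2(\mathcal{S}\times\mathcal{F})\to\ell^2(\mathcal{S}\times\mathcal{F})}.$$ Then there is a constant $C>0$ such that $e_M\le C\,M^{-\alpha/m}$ for all $M\in\mathbb{N}$.
   Context: Setting: $D\subset\mathbb{R}^m$ is a bounded domain, $V=H^1_0(D)$, $\{\psi_\lambda\}_{\lambda\in\mathcal{S}}$ is a Riesz basis of $V$. The parametric coefficient is $a(y)=\bar a+\sum_{j\ge1}y_j\theta_j$, $y\in[-1,1]^{\mathbb{N}}$, and $\langle A_ju,v\rangle=\int_D\theta_j\nabla u\cdot\nabla v\,dx$, $\mathbf{A}_j=(\langle A_j\psi_{\lambda'},\psi_\lambda\rangle)_{\lambda,\lambda'\in\mathcal{S}}$. $\mathcal{F}$ is the set of finitely supported sequences in $\mathbb{N}_0^{\mathbb{N}}$, $L_\nu$ the tensorized Legendre polynomials orthonormal in $L^2(Y,\mu)$ with $\mu$ the uniform probability measure on $Y=[-1,1]^{\mathbb{N}}$, and $\mathbf{M}_j=(\int_Y y_jL_\nu L_{\nu'}\,d\mu)_{\nu,\nu'\in\mathcal{F}}$. Multilevel parametrization assumption: $\{\xi_\mu\}_{\mu\in\Lambda}$ are compactly supported functions on $D$ with levels $|\mu|\in\mathbb{N}_0$, $\operatorname{diam}\operatorname{supp}\xi_\mu\sim2^{-|\mu|}$,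 $\|\xi_\mu\|_{L^\infty(D)}=1$; the number of $\mu$ with $|\mu|\le\ell$ is at most a constant times $2^{m\ell}$, and at each point of $D$ at most a uniformly bounded number of $\xi_\mu$ of any given level are nonzero. $(\mu_j)_{j\ge1}$ enumerates $\Lambda$ with nondecreasing level and $\theta_j=2^{-\alpha|\mu_j|}\xi_{\mu_j}$. *)

theory Defs
  imports "HOL-Analysis.Analysis" "HOL-Probability.Probability"
begin

fun ck_smooth :: "nat \<Rightarrow> ('a::euclidean_space \<Rightarrow> real) \<Rightarrow> bool" where
  "ck_smooth 0 f = continuous_on UNIV f"
| "ck_smooth (Suc k) f = ((\<forall>x. f differentiable (at x)) \<and>
      (\<forall>b. ck_smooth k (\<lambda>x. frechet_derivative f (at x) b)))"

definition cinf_smooth :: "('a::euclidean_space \<Rightarrow> real) \<Rightarrow> bool" where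
  "cinf_smooth f \<longleftrightarrow> (\<forall>k. ck_smooth k f)"

definition test_fun :: "'a::euclidean_space set \<Rightarrow> ('a \<Rightarrow> real) \<Rightarrow> bool" where
  "test_fun D \<phi> \<longleftrightarrow> cinf_smooth \<phi> \<and> compact (closure {x. \<phi> x \<noteq> 0})
      \<and> closure {x. \<phi> x \<noteq> 0} \<subseteq> D"

definition dderiv :: "('a::euclidean_space \<Rightarrow> real) \<Rightarrow> 'a \<Rightarrow> 'a \<Rightarrow> real" where
  "dderiv \<phi> b x = frechet_derivative \<phi> (at x) b"

definition cgrad :: "('a::euclidean_space \<Rightarrow> real) \<Rightarrow> 'a \<Rightarrow> 'a" where
  "cgrad \<phi> x = (\<Sum>b\<in>Basis. dderiv \<phi> b x *\<^sub>R b)"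

definition sq_int :: "'a::euclidean_space set \<Rightarrow> ('a \<Rightarrow> 'b::euclidean_space) \<Rightarrow> bool" where
  "sq_int D f \<longleftrightarrow> set_borel_measurable lebesgue D f
      \<and> set_integrable lebesgue D (\<lambda>x. (norm (f x))\<^sup>2)"

definition is_weak_grad :: "'a::euclidean_space set \<Rightarrow> ('a \<Rightarrow> real) \<Rightarrow> ('a \<Rightarrow> 'a) \<Rightarrow> bool" where
  "is_weak_grad D u g \<longleftrightarrow> sq_int D u \<and> sq_int D g \<and>
     (\<forall>\<phi>. test_fun D \<phi> \<longrightarrow> (\<forall>b\<in>Basis.
        (LINT x:D|lebesgue. u x * dderiv \<phi> b x) = - (LINT x:D|lebesgue. (g x \<bullet> b) * \<phi> x)))"

definition wgrad :: "'a::euclidean_space set \<Rightarrow> ('a \<Rightarrow> real) \<Rightarrow> 'a \<Rightarrow> 'a" where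
  "wgrad D u = (SOME g. is_weak_grad D u g)"

(* H^1_0(D): closure of C_c^\<infinity>(D) in the H^1(D) norm *)
definition H10 :: "'a::euclidean_space set \<Rightarrow> ('a \<Rightarrow> real) set" where
  "H10 D = {u. \<exists>g. is_weak_grad D u g \<and>
      (\<exists>\<phi>::nat \<Rightarrow> 'a \<Rightarrow> real. (\<forall>n. test_fun D (\<phi> n)) \<and>
         (\<lambda>n. (LINT x:D|lebesgue. (u x - \<phi> n x)\<^sup>2 + (norm (g x - cgrad (\<phi> n) x))\<^sup>2))
            \<longlonglongrightarrow> 0)}"

(* squared V-norm (energy norm) of u - \<Sum>_{\<lambda>} c_\<lambda> \<psi>_\<lambda>, c finitely supported *)
definition Vdist2 :: "'a::euclidean_space set \<Rightarrow> ('a \<Rightarrow> real) \<Rightarrow> ('s \<Rightarrow> 'a \<Rightarrow> real)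
     \<Rightarrow> ('s \<Rightarrow> real) \<Rightarrow> real" where
  "Vdist2 D u \<psi> c = (LINT x:D|lebesgue.
      (norm (wgrad D u x - (\<Sum>l\<in>{l. c l \<noteq> 0}. c l *\<^sub>R wgrad D (\<psi> l) x)))\<^sup>2)"

(* Riesz basis of V = H^1_0(D) (normed by \<parallel>\<nabla>u\<parallel>_{L^2}): complete and Riesz-stable *)
definition riesz_basis_H10 :: "'a::euclidean_space set \<Rightarrow> ('s \<Rightarrow> 'a \<Rightarrow> real) \<Rightarrow> bool" where
  "riesz_basis_H10 D \<psi> \<longleftrightarrow> (\<forall>l. \<psi> l \<in> H10 D) \<and>
     (\<forall>u\<in>H10 D. \<forall>\<epsilon>>0. \<exists>c. finite {l. c l \<noteq> 0} \<and> Vdist2 D u \<psi> c < \<epsilon>) \<and>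
     (\<exists>c1 c2. 0 < c1 \<and> 0 < c2 \<and> (\<forall>c. finite {l. c l \<noteq> 0} \<longrightarrow>
        c1 * (\<Sum>l\<in>{l. c l \<noteq> 0}. (c l)\<^sup>2) \<le> Vdist2 D (\<lambda>_. 0) \<psi> c \<and>
        Vdist2 D (\<lambda>_. 0) \<psi> c \<le> c2 * (\<Sum>l\<in>{l. c l \<noteq> 0}. (c l)\<^sup>2)))"

(* (A_j)_{\<lambda>,\<lambda>'} = \<langle>A_j \<psi>_\<lambda>', \<psi>_\<lambda>\<rangle> = \<integral>_D \<theta>_j \<nabla>\<psi>_\<lambda>' \<cdot> \<nabla>\<psi>_\<lambda> *)
definition Amat :: "'a::euclidean_space set \<Rightarrow> ('s \<Rightarrow> 'a \<Rightarrow> real) \<Rightarrow> ('a \<Rightarrow> real) \<Rightarrow> 's \<Rightarrow> 's \<Rightarrow> real" where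
  "Amat D \<psi> \<theta> l l' = (LINT x:D|lebesgue. \<theta> x * (wgrad D (\<psi> l') x \<bullet> wgrad D (\<psi> l) x))"

(* classical Legendre polynomials P_n (Bonnet recursion), P_n(1) = 1 *)
fun legendreP :: "nat \<Rightarrow> real \<Rightarrow> real" where
  "legendreP 0 t = 1"
| "legendreP (Suc 0) t = t"
| "legendreP (Suc (Suc n)) t =
     ((2 * real n + 3) * t * legendreP (Suc n) t - (real n + 1) * legendreP n t) / (real n + 2)"

(* Legendre polynomials orthonormal w.r.t. the uniform probability measure on [-1,1] *)
definition legendreL :: "nat \<Rightarrow> real \<Rightarrow> real" where
  "legendreL n t = sqrt (2 * real n + 1) * legendreP n t"

definition Fidx :: "(nat \<Rightarrow> nat) set" where
  "Fidx = {\<nu>. finite {j. \<nu> j \<noteq> 0}}"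

definition tensL :: "(nat \<Rightarrow> nat) \<Rightarrow> (nat \<Rightarrow> real) \<Rightarrow> real" where
  "tensL \<nu> y = (\<Prod>j\<in>{j. \<nu> j \<noteq> 0}. legendreL (\<nu> j) (y j))"

definition muY :: "(nat \<Rightarrow> real) measure" where
  "muY = PiM UNIV (\<lambda>_. uniform_measure lborel {-1..1})"

definition Mmat :: "nat \<Rightarrow> (nat \<Rightarrow> nat) \<Rightarrow> (nat \<Rightarrow> nat) \<Rightarrow> real" where
  "Mmat j \<nu> \<nu>' = (\<integral>y. y j * tensL \<nu> y * tensL \<nu>' y \<partial>muY)"

definition fin_l2_unit :: "('s \<times> (nat \<Rightarrow> nat) \<Rightarrow> real) \<Rightarrow> bool" where
  "fin_l2_unit v \<longleftrightarrow> finite {p. v p \<noteq> 0} \<and> {p. v p \<noteq> 0} \<subseteq> UNIV \<times> Fidx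
      \<and> (\<Sum>p\<in>{p. v p \<noteq> 0}. (v p)\<^sup>2) \<le> 1"

(* entries of \<Sum>_{j\<ge>M} A_j \<otimes> M_j (j counted from 0) *)
definition tail_entry :: "(nat \<Rightarrow> 's \<Rightarrow> 's \<Rightarrow> real) \<Rightarrow> nat
     \<Rightarrow> 's \<times> (nat \<Rightarrow> nat) \<Rightarrow> 's \<times> (nat \<Rightarrow> nat) \<Rightarrow> real" where
  "tail_entry A M p q = (\<Sum>j. if M \<le> j then A j (fst p) (fst q) * Mmat j (snd p) (snd q) else 0)"

(* e_M as an operator norm: sup of |\<langle>w, B v\<rangle>| over finitely supported unit vectors *)
definition tail_norm :: "(nat \<Rightarrow> 's \<Rightarrow> 's \<Rightarrow> real) \<Rightarrow> nat \<Rightarrow> ereal" where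
  "tail_norm A M = (SUP (v, w) \<in> {(v, w). fin_l2_unit v \<and> fin_l2_unit w}.
      ereal \<bar>\<Sum>p\<in>{p. w p \<noteq> 0}. \<Sum>q\<in>{q. v q \<noteq> 0}. w p * tail_entry A M p q * v q\<bar>)"

definition multilevel ::
  "'a::euclidean_space set \<Rightarrow> 'l set \<Rightarrow> ('l \<Rightarrow> nat) \<Rightarrow> ('l \<Rightarrow> 'a \<Rightarrow> real) \<Rightarrow> (nat \<Rightarrow> 'l) \<Rightarrow> bool" where
  "multilevel D Lam lev \<xi> enum \<longleftrightarrow>
     (\<forall>\<mu>\<in>Lam. \<xi> \<mu> \<in> borel_measurable lebesgue
        \<and> compact (closure {x. \<xi> \<mu> x \<noteq> 0}) \<and> closure {x. \<xi> \<mu> x \<noteq> 0} \<subseteq> D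
        \<and> esssup (restrict_space lebesgue D) (\<lambda>x. ereal \<bar>\<xi> \<mu> x\<bar>) = 1)
   \<and> (\<exists>c1 c2. 0 < c1 \<and> 0 < c2 \<and> (\<forall>\<mu>\<in>Lam.
        c1 * 2 powr (- real (lev \<mu>)) \<le> diameter (closure {x. \<xi> \<mu> x \<noteq> 0}) \<and>
        diameter (closure {x. \<xi> \<mu> x \<noteq> 0}) \<le> c2 * 2 powr (- real (lev \<mu>))))
   \<and> (\<exists>C. \<forall>l. finite {\<mu>\<in>Lam. lev \<mu> \<le> l} \<and>
        real (card {\<mu>\<in>Lam. lev \<mu> \<le> l}) \<le> C * 2 powr (real DIM('a) * real l))
   \<and> (\<exists>K. \<forall>x\<in>D. \<forall>l. finite {\<mu>\<in>Lam. lev \<mu> = l \<and> \<xi> \<mu> x \<noteq> 0} \<and>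
        card {\<mu>\<in>Lam. lev \<mu> = l \<and> \<xi> \<mu> x \<noteq> 0} \<le> K)
   \<and> bij_betw enum UNIV Lam \<and> mono (lev \<circ> enum)"

end

theory Submission
  imports Defs
begin

(* For finitely supported unit vectors v, w only finitely many j contribute to <w, B_M v>, and
   <w, B_M v> = \<integral>_D \<Sum>_{j \<ge> M} \<theta>_j(x) E_j(x) dx  with
   E_j(x) = \<integral>_Y y_j \<nabla>W(x,y) \<bullet> \<nabla>V(x,y) d\<mu>(y),  W = \<Sum> w_{\<lambda>\<nu>} \<psi>_\<lambda> L_\<nu>,  V likewise.
   Since |y_j| \<le> 1, AM-GM and the orthonormality of the L_\<nu> give |E_j(x)| \<le> (N_w(x) + N_v(x)) / 2
   with N_w(x) = \<Sum>_\<nu> |\<Sum>_\<lambda> w_{\<lambda>\<nu>} \<nabla>\<psi>_\<lambda>(x)|^2, and the upper Riesz bound gives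
   \<integral>_D N_w \<le> c_2.  Hence e_M \<le> c_2 ess sup_x \<Sum>_{j \<ge> M} |\<theta>_j(x)|.  At each x at most K of the
   \<xi>_\<mu> of a given level are nonzero, so this sum is a geometric series bounded by a multiple of
   2^(-\<alpha> l_M), l_M = |\<mu>_M|; as at most C 2^(m l) indices have level \<le> l, 2^(-l_M) \<lesssim> M^(-1/m). *)

section \<open>Legendre polynomials on \<open>[-1, 1]\<close>\<close>

abbreviation uniform_pm1 :: "real measure" where
  "uniform_pm1 \<equiv> uniform_measure lborel {-1..1}"

lemma uniform_pm1_eq_density:
  "uniform_pm1 = density lborel (\<lambda>x. ennreal (indicator {-1..1} x / 2))"
proof -
  have "(1::ennreal) / 2 = inverse 2" by (simp add: divide_ennreal_def)
  then show ?thesis unfolding uniform_measure_def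
    by (intro density_cong) (auto split: split_indicator simp: divide_ennreal)
qed

lemma integrable_uniform_pm1:
  fixes f :: "real \<Rightarrow> real"
  assumes "continuous_on UNIV f"
  shows "integrable uniform_pm1 f"
proof -
  have "continuous_on {-1..1} f" using assms continuous_on_subset by blast
  then show ?thesis
    using assms borel_integrable_atLeastAtMost'[of "-1" 1 f] unfolding uniform_pm1_eq_density
    by (subst integrable_density)
       (auto simp: set_integrable_def borel_measurable_continuous_onI intro!: integrable_mult_left)
qed

lemma integral_uniform_pm1_FTC:
  fixes f :: "real \<Rightarrow> real"
  assumes "\<And>x. (F has_real_derivative f x) (at x)" "continuous_on UNIV f"
  shows "integral\<^sup>L uniform_pm1 f = (F 1 - F (-1)) / 2"
proof -
  have "integral\<^sup>L uniform_pm1 f = integral\<^sup>L lborel (\<lambda>x. indicator {-1..1} x *\<^sub>R f x) / 2"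
    unfolding uniform_pm1_eq_density using assms(2)
    by (subst integral_density) (auto simp: mult.commute borel_measurable_continuous_onI)
  also have "\<dots> = (F 1 - F (-1)) / 2"
    using assms by (subst integral_FTC_atLeastAtMost[where F=F])
      (auto simp: has_real_derivative_iff_has_vector_derivative[symmetric]
        intro: has_field_derivative_at_within continuous_on_subset)
  finally show ?thesis .
qed

lemma integral_uniform_pm1_diff:
  fixes f g :: "real \<Rightarrow> real"
  assumes "continuous_on UNIV f" "continuous_on UNIV g"
  shows "integral\<^sup>L uniform_pm1 (\<lambda>t. a * f t - b * g t) =
    a * integral\<^sup>L uniform_pm1 f - b * integral\<^sup>L uniform_pm1 g"
  using assms by (simp add: integrable_uniform_pm1)

fun legendreP_deriv :: "nat \<Rightarrow> real \<Rightarrow> real" where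
  "legendreP_deriv 0 t = 0"
| "legendreP_deriv (Suc 0) t = 1"
| "legendreP_deriv (Suc (Suc n)) t =
     ((2 * real n + 3) * (legendreP (Suc n) t + t * legendreP_deriv (Suc n) t)
       - (real n + 1) * legendreP_deriv n t) / (real n + 2)"

lemma legendreP_has_real_derivative:
  "(legendreP n has_real_derivative legendreP_deriv n t) (at t)"
  by (induction n t rule: legendreP.induct)
     (auto intro!: derivative_eq_intros, simp add: field_simps)

lemma continuous_on_legendreP [continuous_intros]:
  "continuous_on S f \<Longrightarrow> continuous_on S (\<lambda>x. legendreP n (f x))"
  using legendreP_has_real_derivative DERIV_isCont continuous_at_imp_continuous_on
    continuous_on_compose2[of UNIV "legendreP n" S f] by blast

lemma legendreP_recurrence:
  "(real n + 2) * legendreP (Suc (Suc n)) t =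
     (2 * real n + 3) * t * legendreP (Suc n) t - (real n + 1) * legendreP n t"
proof -
  have "real n + 2 \<noteq> 0" by simp
  then show ?thesis by simp
qed

lemma legendreP_deriv_identities:
  "t * legendreP_deriv (Suc n) t - legendreP_deriv n t = (real n + 1) * legendreP (Suc n) t \<and>
   legendreP_deriv (Suc n) t - t * legendreP_deriv n t = (real n + 1) * legendreP n t"
proof (induction n)
  case 0
  then show ?case by simp
next
  case (Suc n)
  define a b c d where "a = legendreP (Suc n) t" and "b = legendreP n t"
    and "c = legendreP_deriv (Suc n) t" and "d = legendreP_deriv n t"
  have E: "t * c = d + (real n + 1) * a" and F: "c = t * d + (real n + 1) * b"
    using Suc.IH unfolding a_def b_def c_def d_def by linarith+
  have "legendreP_deriv (Suc (Suc n)) t =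
      ((2 * real n + 3) * (a + (d + (real n + 1) * a)) - (real n + 1) * d) / (real n + 2)"
    unfolding a_def c_def d_def E[unfolded c_def d_def a_def, symmetric] by simp
  also have "\<dots> = (2 * real n + 3) * a + d"
    by (simp add: field_simps)
  finally have D: "legendreP_deriv (Suc (Suc n)) t = (2 * real n + 3) * a + d" .
  have P: "(real n + 2) * legendreP (Suc (Suc n)) t = (2 * real n + 3) * t * a - (real n + 1) * b"
    unfolding a_def b_def by (rule legendreP_recurrence)
  show ?case
  proof
    have "t * legendreP_deriv (Suc (Suc n)) t - c = (2 * real n + 3) * t * a - (real n + 1) * b"
      unfolding D F by (simp add: algebra_simps)
    then show "t * legendreP_deriv (Suc (Suc n)) t - legendreP_deriv (Suc n) t =
        (real (Suc n) + 1) * legendreP (Suc (Suc n)) t"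
      unfolding c_def P[symmetric] by (simp add: algebra_simps)
    show "legendreP_deriv (Suc (Suc n)) t - t * legendreP_deriv (Suc n) t =
        (real (Suc n) + 1) * legendreP (Suc n) t"
      unfolding D c_def[symmetric] a_def[symmetric] using E by (simp add: algebra_simps)
  qed
qed

lemma legendreP_deriv_Suc_Suc:
  "legendreP_deriv (Suc (Suc n)) t = (2 * real n + 3) * legendreP (Suc n) t + legendreP_deriv n t"
proof -
  have "t * legendreP_deriv (Suc n) t = legendreP_deriv n t + (real n + 1) * legendreP (Suc n) t"
    using legendreP_deriv_identities[of t n] by linarith
  then show ?thesis by (simp add: field_simps)
qed

lemma legendreP_one: "legendreP n 1 = 1"
  by (induction n "1::real" rule: legendreP.induct) (auto simp: field_simps)

lemma legendreP_minus_one: "legendreP n (-1) = (-1) ^ n"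
  by (induction n "-1::real" rule: legendreP.induct) (auto simp: field_simps)

declare legendreP.simps(3) [simp del] legendreP_deriv.simps(3) [simp del]

lemma integral_legendreP:
  assumes "n \<ge> 1"
  shows "integral\<^sup>L uniform_pm1 (legendreP n) = 0"
proof -
  obtain k where n: "n = Suc k" using assms by (cases n) auto
  define F where "F t = (legendreP (Suc (Suc k)) t - legendreP k t) / (2 * real k + 3)" for t
  have "(F has_real_derivative legendreP (Suc k) x) (at x)" for x
  proof -
    have "(F has_real_derivative
        (legendreP_deriv (Suc (Suc k)) x - legendreP_deriv k x) / (2 * real k + 3)) (at x)"
      unfolding F_def
      by (intro DERIV_cdivide DERIV_diff legendreP_has_real_derivative)
    then show ?thesis by (simp add: legendreP_deriv_Suc_Suc)
  qed
  then have "integral\<^sup>L uniform_pm1 (legendreP (Suc k)) = (F 1 - F (-1)) / 2"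
    by (intro integral_uniform_pm1_FTC continuous_intros)
  then show ?thesis unfolding n F_def by (simp add: legendreP_one legendreP_minus_one)
qed

lemma integral_legendreP_recurrence:
  fixes f :: "real \<Rightarrow> real"
  assumes "continuous_on UNIV f"
  shows "(real n + 2) * integral\<^sup>L uniform_pm1 (\<lambda>t. f t * legendreP (Suc (Suc n)) t) =
    (2 * real n + 3) * integral\<^sup>L uniform_pm1 (\<lambda>t. t * f t * legendreP (Suc n) t)
      - (real n + 1) * integral\<^sup>L uniform_pm1 (\<lambda>t. f t * legendreP n t)"
proof -
  have "(\<lambda>t. (real n + 2) * (f t * legendreP (Suc (Suc n)) t)) =
      (\<lambda>t. (2 * real n + 3) * (t * f t * legendreP (Suc n) t) - (real n + 1) * (f t * legendreP n t))"
  proof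
    fix t
    show "(real n + 2) * (f t * legendreP (Suc (Suc n)) t) =
        (2 * real n + 3) * (t * f t * legendreP (Suc n) t) - (real n + 1) * (f t * legendreP n t)"
      using arg_cong[OF legendreP_recurrence[of n t], of "\<lambda>z. f t * z"]
      by (simp add: algebra_simps)
  qed
  then have "integral\<^sup>L uniform_pm1 (\<lambda>t. (real n + 2) * (f t * legendreP (Suc (Suc n)) t)) =
      (2 * real n + 3) * integral\<^sup>L uniform_pm1 (\<lambda>t. t * f t * legendreP (Suc n) t)
        - (real n + 1) * integral\<^sup>L uniform_pm1 (\<lambda>t. f t * legendreP n t)"
    using assms by (simp add: integral_uniform_pm1_diff continuous_intros)
  then show ?thesis by simp
qed

lemma integral_power_legendreP:
  assumes "k < n"
  shows "integral\<^sup>L uniform_pm1 (\<lambda>t. t ^ k * legendreP n t) = 0"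
  using assms
proof (induction k arbitrary: n)
  case 0
  then show ?case using integral_legendreP[of n] by simp
next
  case (Suc k)
  then obtain r where n: "n = Suc r" and "k < r" by (cases n) auto
  then have "(2 * real r + 3) * integral\<^sup>L uniform_pm1 (\<lambda>t. t * t ^ k * legendreP (Suc r) t) = 0"
    using integral_legendreP_recurrence[of "\<lambda>t. t ^ k" r] Suc.IH[of r] Suc.IH[of "Suc (Suc r)"]
    by (simp add: continuous_intros)
  then show ?case unfolding n by simp
qed

lemma integral_power_legendreP_legendreP:
  assumes "m + k < n"
  shows "integral\<^sup>L uniform_pm1 (\<lambda>t. t ^ k * legendreP n t * legendreP m t) = 0"
  using assms
proof (induction m arbitrary: k rule: induct_nat_012)
  case 0
  then show ?case using integral_power_legendreP[of k n] by simp
next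
  case 1
  then show ?case using integral_power_legendreP[of "Suc k" n] by (simp add: ac_simps)
next
  case (ge2 r)
  have "(real r + 2) * integral\<^sup>L uniform_pm1 (\<lambda>t. t ^ k * legendreP n t * legendreP (Suc (Suc r)) t) = 0"
    using integral_legendreP_recurrence[of "\<lambda>t. t ^ k * legendreP n t" r]
      ge2.IH(1)[of k] ge2.IH(2)[of "Suc k"] ge2.prems
    by (simp add: continuous_intros ac_simps)
  then show ?case by simp
qed

lemma integral_legendreP_legendreP_neq:
  assumes "m \<noteq> n"
  shows "integral\<^sup>L uniform_pm1 (\<lambda>t. legendreP m t * legendreP n t) = 0"
proof (cases "m < n")
  case True
  then show ?thesis using integral_power_legendreP_legendreP[of m 0 n] by (simp add: mult.commute)
next
  case False
  then show ?thesis using assms integral_power_legendreP_legendreP[of n 0 m] by simp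
qed

lemma integral_legendreP_sq:
  "(2 * real n + 1) * integral\<^sup>L uniform_pm1 (\<lambda>t. legendreP n t * legendreP n t) = 1"
proof (induction n rule: induct_nat_012)
  case 0
  interpret prob_space uniform_pm1 by (rule prob_space_uniform_measure) auto
  show ?case by simp
next
  case 1
  have "integral\<^sup>L uniform_pm1 (\<lambda>t. t * t) = (1 ^ 3 / 3 - (- 1) ^ 3 / 3) / 2"
    by (rule integral_uniform_pm1_FTC[where F="\<lambda>t. t ^ 3 / 3"])
       (auto intro!: derivative_eq_intros continuous_intros simp: power2_eq_square)
  then show ?case by simp
next
  case (ge2 n)
  define I where "I k = integral\<^sup>L uniform_pm1 (\<lambda>t. legendreP k t * legendreP k t)" for k
  define T where "T = integral\<^sup>L uniform_pm1 (\<lambda>t. t * legendreP (Suc (Suc n)) t * legendreP (Suc n) t)"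
  have TI2: "(real n + 2) * I (Suc (Suc n)) = (2 * real n + 3) * T"
    using integral_legendreP_recurrence[of "legendreP (Suc (Suc n))" n]
      integral_legendreP_legendreP_neq[of "Suc (Suc n)" n]
    unfolding I_def T_def by (simp add: continuous_intros)
  have TI1: "(2 * real n + 5) * T = (real n + 2) * I (Suc n)"
    using integral_legendreP_recurrence[of "legendreP (Suc n)" "Suc n"]
      integral_legendreP_legendreP_neq[of "Suc n" "Suc (Suc (Suc n))"]
    unfolding I_def T_def by (simp add: continuous_intros ac_simps)
  have I1: "(2 * real n + 3) * I (Suc n) = 1"
    using ge2.IH(2) unfolding I_def by (simp add: algebra_simps)
  have "(real n + 2) * ((2 * real n + 5) * I (Suc (Suc n))) =
      (2 * real n + 3) * ((2 * real n + 5) * T)"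
    using TI2 by (simp add: ac_simps)
  also have "\<dots> = (real n + 2) * ((2 * real n + 3) * I (Suc n))"
    unfolding TI1 by (simp add: ac_simps)
  finally have "(2 * real n + 5) * I (Suc (Suc n)) = 1"
    unfolding I1 by simp
  then show ?case unfolding I_def by (simp add: algebra_simps)
qed

lemma integral_legendreL_legendreL:
  "integral\<^sup>L uniform_pm1 (\<lambda>t. legendreL m t * legendreL n t) = (if m = n then 1 else 0)"
proof -
  have "integral\<^sup>L uniform_pm1 (\<lambda>t. legendreL m t * legendreL n t) =
      sqrt (2 * real m + 1) * sqrt (2 * real n + 1) *
        integral\<^sup>L uniform_pm1 (\<lambda>t. legendreP m t * legendreP n t)"
    unfolding legendreL_def by (simp add: ac_simps integral_mult_right_zero[symmetric])
  then show ?thesis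
    using integral_legendreP_legendreP_neq[of m n] integral_legendreP_sq[of n] by auto
qed

section \<open>Tensorized Legendre polynomials and the matrices \<open>M\<^sub>j\<close>\<close>

interpretation uniform_pm1_product: product_prob_space "\<lambda>_::nat. uniform_pm1" UNIV
  by (intro product_prob_space.intro product_sigma_finite.intro product_prob_space_axioms.intro)
     (auto simp: prob_space_uniform_measure prob_space_imp_sigma_finite)

lemma muY_integral_prod:
  fixes f :: "nat \<Rightarrow> real \<Rightarrow> real"
  assumes I: "finite I" and cont: "\<And>i. i \<in> I \<Longrightarrow> continuous_on UNIV (f i)"
  shows "integrable muY (\<lambda>y. \<Prod>i\<in>I. f i (y i))"
    and "integral\<^sup>L muY (\<lambda>y. \<Prod>i\<in>I. f i (y i)) = (\<Prod>i\<in>I. integral\<^sup>L uniform_pm1 (f i))"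
proof -
  let ?P = "PiM I (\<lambda>_. uniform_pm1)" and ?g = "\<lambda>x. \<Prod>i\<in>I. f i (x i)"
  have distr: "distr muY ?P (\<lambda>x. restrict x I) = ?P"
    unfolding muY_def using I by (intro uniform_pm1_product.distr_PiM_restrict_finite) auto
  have restr: "(\<lambda>x. restrict x I) \<in> measurable muY ?P"
    unfolding muY_def by (rule measurable_restrict_subset) auto
  have "f i \<in> borel_measurable uniform_pm1" if "i \<in> I" for i
    using borel_measurable_continuous_onI[OF cont[OF that]]
      measurable_cong_sets[of uniform_pm1 borel borel borel] by simp
  then have g: "?g \<in> borel_measurable ?P"
    by (intro borel_measurable_prod measurable_compose[OF measurable_component_singleton]) auto
  have restrict_eq: "?g (restrict y I) = (\<Prod>i\<in>I. f i (y i))" for y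
    by (rule prod.cong) auto
  have "integrable ?P ?g"
    using I cont by (intro uniform_pm1_product.product_integrable_prod integrable_uniform_pm1) auto
  then show "integrable muY (\<lambda>y. \<Prod>i\<in>I. f i (y i))"
    using distr integrable_distr_eq[OF restr g] unfolding restrict_eq by simp
  have "integral\<^sup>L ?P ?g = (\<Prod>i\<in>I. integral\<^sup>L uniform_pm1 (f i))"
    using I cont by (intro uniform_pm1_product.product_integral_prod integrable_uniform_pm1) auto
  then show "integral\<^sup>L muY (\<lambda>y. \<Prod>i\<in>I. f i (y i)) = (\<Prod>i\<in>I. integral\<^sup>L uniform_pm1 (f i))"
    using distr integral_distr[OF restr g] unfolding restrict_eq by simp
qed

lemma AE_muY_abs_le_1: "AE y in muY. \<bar>y j\<bar> \<le> 1"
proof -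
  have "AE t in uniform_pm1. \<bar>t\<bar> \<le> 1"
    by (rule AE_uniform_measureI) auto
  then show ?thesis
    unfolding muY_def by (rule uniform_pm1_product.AE_component[of j, simplified])
qed

lemma continuous_on_legendreL [continuous_intros]:
  "continuous_on S f \<Longrightarrow> continuous_on S (\<lambda>x. legendreL n (f x))"
  unfolding legendreL_def by (intro continuous_intros)

lemma tensL_eq_prod:
  assumes "finite I" "{j. \<nu> j \<noteq> 0} \<subseteq> I"
  shows "tensL \<nu> y = (\<Prod>i\<in>I. legendreL (\<nu> i) (y i))"
  unfolding tensL_def using assms by (intro prod.mono_neutral_left) (auto simp: legendreL_def)

lemma
  assumes "\<nu> \<in> Fidx" "\<nu>' \<in> Fidx"
  shows integrable_tensL_tensL: "integrable muY (\<lambda>y. tensL \<nu> y * tensL \<nu>' y)"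
    and integral_tensL_tensL: "integral\<^sup>L muY (\<lambda>y. tensL \<nu> y * tensL \<nu>' y) = (if \<nu> = \<nu>' then 1 else 0)"
proof -
  define I where "I = {j. \<nu> j \<noteq> 0} \<union> {j. \<nu>' j \<noteq> 0}"
  have I: "finite I" using assms unfolding I_def Fidx_def by auto
  have eq: "(\<lambda>y. tensL \<nu> y * tensL \<nu>' y) =
      (\<lambda>y. \<Prod>i\<in>I. legendreL (\<nu> i) (y i) * legendreL (\<nu>' i) (y i))"
    using I by (auto simp: tensL_eq_prod[of I] I_def prod.distrib)
  have cont: "continuous_on UNIV (\<lambda>t. legendreL (\<nu> i) t * legendreL (\<nu>' i) t)" for i
    by (intro continuous_intros)
  show "integrable muY (\<lambda>y. tensL \<nu> y * tensL \<nu>' y)"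
    unfolding eq by (rule muY_integral_prod[OF I cont])
  have "integral\<^sup>L muY (\<lambda>y. tensL \<nu> y * tensL \<nu>' y) = (\<Prod>i\<in>I. if \<nu> i = \<nu>' i then 1 else 0)"
    unfolding eq muY_integral_prod(2)[OF I cont] integral_legendreL_legendreL ..
  also have "\<dots> = (if \<nu> = \<nu>' then 1 else 0)"
  proof (cases "\<nu> = \<nu>'")
    case False
    then obtain i where i: "\<nu> i \<noteq> \<nu>' i" by auto
    then have "i \<in> I" unfolding I_def by auto
    then show ?thesis using i I False by (auto intro!: prod_zero)
  qed simp
  finally show "integral\<^sup>L muY (\<lambda>y. tensL \<nu> y * tensL \<nu>' y) = (if \<nu> = \<nu>' then 1 else 0)" .
qed

lemma
  assumes "\<nu> \<in> Fidx" "\<nu>' \<in> Fidx"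
  shows integrable_Mmat: "integrable muY (\<lambda>y. y j * tensL \<nu> y * tensL \<nu>' y)"
    and Mmat_eq_0: "\<nu> j = 0 \<Longrightarrow> \<nu>' j = 0 \<Longrightarrow> Mmat j \<nu> \<nu>' = 0"
proof -
  define I where "I = insert j ({j. \<nu> j \<noteq> 0} \<union> {j. \<nu>' j \<noteq> 0})"
  have I: "finite I" and j: "j \<in> I" using assms unfolding I_def Fidx_def by auto
  have supp: "{j. \<nu> j \<noteq> 0} \<subseteq> I" "{j. \<nu>' j \<noteq> 0} \<subseteq> I" unfolding I_def by auto
  define f where "f i t = (if i = j then t else 1) * legendreL (\<nu> i) t * legendreL (\<nu>' i) t" for i t
  have eq: "(\<lambda>y. y j * tensL \<nu> y * tensL \<nu>' y) = (\<lambda>y. \<Prod>i\<in>I. f i (y i))"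
  proof
    fix y
    have "(\<Prod>i\<in>I. f i (y i)) =
        (\<Prod>i\<in>I. if i = j then y i else 1) * (\<Prod>i\<in>I. legendreL (\<nu> i) (y i)) *
          (\<Prod>i\<in>I. legendreL (\<nu>' i) (y i))"
      unfolding f_def by (simp add: prod.distrib)
    also have "\<dots> = y j * tensL \<nu> y * tensL \<nu>' y"
      using I j by (simp add: tensL_eq_prod[OF I supp(1)] tensL_eq_prod[OF I supp(2)])
    finally show "y j * tensL \<nu> y * tensL \<nu>' y = (\<Prod>i\<in>I. f i (y i))" ..
  qed
  have cont: "continuous_on UNIV (f i)" for i
    unfolding f_def by (cases "i = j") (auto intro!: continuous_intros)
  show "integrable muY (\<lambda>y. y j * tensL \<nu> y * tensL \<nu>' y)"
    unfolding eq by (rule muY_integral_prod[OF I cont])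
  assume "\<nu> j = 0" "\<nu>' j = 0"
  then have "f j = legendreP 1"
    unfolding f_def by (simp add: fun_eq_iff legendreL_def)
  then have "integral\<^sup>L uniform_pm1 (f j) = 0"
    using integral_legendreP[of 1] by simp
  then show "Mmat j \<nu> \<nu>' = 0"
    unfolding Mmat_def eq muY_integral_prod(2)[OF I cont] using I j by (auto intro!: prod_zero)
qed

text \<open>With \<open>k = snd\<close> and \<open>G p = \<nabla>\<psi>\<^bsub>fst p\<^esub>(x)\<close> this is \<open>N\<^sub>w(x) = \<integral>\<^sub>Y \<bar>\<nabla>W(x, y)\<bar>\<^sup>2 d\<mu>(y)\<close>,
  by Parseval (\<open>integral_norm_sum_tensL\<close>).\<close>

definition grouped_sq_norm ::
  "('p \<Rightarrow> 'k) \<Rightarrow> ('p \<Rightarrow> real) \<Rightarrow> ('p \<Rightarrow> 'v::real_normed_vector) \<Rightarrow> 'p set \<Rightarrow> real" where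
  "grouped_sq_norm k a G P = (\<Sum>\<kappa>\<in>k ` P. (norm (\<Sum>p\<in>{p\<in>P. k p = \<kappa>}. a p *\<^sub>R G p))\<^sup>2)"

lemma grouped_sq_norm_nonneg: "0 \<le> grouped_sq_norm k a G P"
  unfolding grouped_sq_norm_def by (intro sum_nonneg) auto

lemma power2_norm_sum:
  fixes G :: "'p \<Rightarrow> 'v::real_inner"
  shows "(norm (\<Sum>p\<in>P. a p *\<^sub>R G p))\<^sup>2 = (\<Sum>p\<in>P. \<Sum>q\<in>P. a p * a q * (G p \<bullet> G q))"
  by (simp add: power2_norm_eq_inner inner_sum_left inner_sum_right sum_distrib_left ac_simps
      inner_commute)

lemma grouped_sq_norm_eq_double_sum:
  fixes G :: "'p \<Rightarrow> 'v::real_inner"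
  assumes P: "finite P"
  shows "grouped_sq_norm k a G P =
    (\<Sum>p\<in>P. \<Sum>q\<in>P. if k p = k q then a p * a q * (G p \<bullet> G q) else 0)"
proof -
  have "(\<Sum>p\<in>P. \<Sum>q\<in>P. if k p = k q then a p * a q * (G p \<bullet> G q) else 0) =
      (\<Sum>p\<in>P. \<Sum>q\<in>{q\<in>P. k q = k p}. a p * a q * (G p \<bullet> G q))"
  proof (rule sum.cong[OF refl])
    fix p
    have "(\<Sum>q\<in>{q\<in>P. k q = k p}. a p * a q * (G p \<bullet> G q)) =
        (\<Sum>q\<in>{q\<in>P. k p = k q}. a p * a q * (G p \<bullet> G q))"
      by (rule sum.cong) auto
    also have "\<dots> = (\<Sum>q\<in>P. if k p = k q then a p * a q * (G p \<bullet> G q) else 0)"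
      by (rule sum.inter_filter[OF P])
    finally show "(\<Sum>q\<in>P. if k p = k q then a p * a q * (G p \<bullet> G q) else 0) =
        (\<Sum>q\<in>{q\<in>P. k q = k p}. a p * a q * (G p \<bullet> G q))" by (rule sym)
  qed
  also have "\<dots> = (\<Sum>\<kappa>\<in>k ` P. \<Sum>p\<in>{p\<in>P. k p = \<kappa>}. \<Sum>q\<in>{q\<in>P. k q = k p}. a p * a q * (G p \<bullet> G q))"
    using P by (rule sum.image_gen)
  also have "\<dots> = grouped_sq_norm k a G P"
    unfolding grouped_sq_norm_def power2_norm_sum by (intro sum.cong refl) auto
  finally show ?thesis ..
qed

lemma
  fixes F :: "'p \<Rightarrow> 'q \<Rightarrow> 'a \<Rightarrow> real"
  assumes "finite P" "finite Q" "\<And>p q. p \<in> P \<Longrightarrow> q \<in> Q \<Longrightarrow> integrable M (F p q)"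
  shows integrable_double_sum: "integrable M (\<lambda>y. \<Sum>p\<in>P. \<Sum>q\<in>Q. c p q * F p q y)"
    and integral_double_sum: "integral\<^sup>L M (\<lambda>y. \<Sum>p\<in>P. \<Sum>q\<in>Q. c p q * F p q y) =
      (\<Sum>p\<in>P. \<Sum>q\<in>Q. c p q * integral\<^sup>L M (F p q))"
  using assms
  by (auto simp: Bochner_Integration.integral_sum intro!: Bochner_Integration.integrable_sum sum.cong)

lemma
  fixes G :: "'p \<Rightarrow> 'v::real_inner"
  assumes P: "finite P" and Fidx: "\<nu> ` P \<subseteq> Fidx"
  shows integrable_norm_sum_tensL: "integrable muY (\<lambda>y. (norm (\<Sum>p\<in>P. (a p * tensL (\<nu> p) y) *\<^sub>R G p))\<^sup>2)"
    and integral_norm_sum_tensL: "integral\<^sup>L muY (\<lambda>y. (norm (\<Sum>p\<in>P. (a p * tensL (\<nu> p) y) *\<^sub>R G p))\<^sup>2) =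
      grouped_sq_norm \<nu> a G P"
proof -
  have eq: "(norm (\<Sum>p\<in>P. (a p * tensL (\<nu> p) y) *\<^sub>R G p))\<^sup>2 =
      (\<Sum>p\<in>P. \<Sum>q\<in>P. (a p * a q * (G p \<bullet> G q)) * (tensL (\<nu> p) y * tensL (\<nu> q) y))" for y
    unfolding power2_norm_sum by (simp add: ac_simps)
  show "integrable muY (\<lambda>y. (norm (\<Sum>p\<in>P. (a p * tensL (\<nu> p) y) *\<^sub>R G p))\<^sup>2)"
    unfolding eq using P Fidx by (intro integrable_double_sum integrable_tensL_tensL) auto
  show "integral\<^sup>L muY (\<lambda>y. (norm (\<Sum>p\<in>P. (a p * tensL (\<nu> p) y) *\<^sub>R G p))\<^sup>2) =
      grouped_sq_norm \<nu> a G P"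
    unfolding eq grouped_sq_norm_eq_double_sum[OF P] using P Fidx
    by (subst integral_double_sum)
       (auto intro!: integrable_tensL_tensL sum.cong simp: integral_tensL_tensL image_subset_iff)
qed

lemma abs_inner_le_half_sum_sq: "\<bar>(x::'a::real_inner) \<bullet> y\<bar> \<le> (x \<bullet> x + y \<bullet> y) / 2"
proof -
  have "\<bar>x \<bullet> y\<bar> \<le> norm x * norm y" by (rule Cauchy_Schwarz_ineq2)
  also have "\<dots> \<le> ((norm x)\<^sup>2 + (norm y)\<^sup>2) / 2"
    using sum_squares_bound[of "norm x" "norm y"] by (simp add: field_simps)
  finally show ?thesis by (simp add: power2_norm_eq_inner)
qed

text \<open>The bilinear form of \<open>M\<^sub>j\<close> is \<open>\<integral> y\<^sub>j W(y) \<bullet> V(y) d\<mu>\<close> for the vector-valued polynomials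
  \<open>W = \<Sum>\<^sub>p a\<^sub>p L\<^bsub>\<nu> p\<^esub> G\<^sub>p\<close>, \<open>V = \<Sum>\<^sub>q b\<^sub>q L\<^bsub>\<mu> q\<^esub> H\<^sub>q\<close>; since \<open>\<bar>y\<^sub>j\<bar> \<le> 1\<close>, AM-GM and
  Parseval bound it by the mean of the grouped square norms.\<close>

lemma abs_Mmat_bilinear_le:
  fixes G :: "'p \<Rightarrow> 'v::real_inner" and H :: "'q \<Rightarrow> 'v"
  assumes P: "finite P" "\<nu> ` P \<subseteq> Fidx" and Q: "finite Q" "\<mu> ` Q \<subseteq> Fidx"
  shows "\<bar>\<Sum>p\<in>P. \<Sum>q\<in>Q. a p * b q * (G p \<bullet> H q) * Mmat j (\<nu> p) (\<mu> q)\<bar> \<le>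
    (grouped_sq_norm \<nu> a G P + grouped_sq_norm \<mu> b H Q) / 2"
proof -
  define W where "W y = (\<Sum>p\<in>P. (a p * tensL (\<nu> p) y) *\<^sub>R G p)" for y
  define V where "V y = (\<Sum>q\<in>Q. (b q * tensL (\<mu> q) y) *\<^sub>R H q)" for y
  have WV: "y j * (W y \<bullet> V y) =
      (\<Sum>p\<in>P. \<Sum>q\<in>Q. (a p * b q * (G p \<bullet> H q)) * (y j * tensL (\<nu> p) y * tensL (\<mu> q) y))" for y
    unfolding W_def V_def
    by (simp add: inner_sum_left inner_sum_right sum_distrib_left ac_simps) (rule sum.swap)
  have int_WV: "integrable muY (\<lambda>y. y j * (W y \<bullet> V y))"
    unfolding WV using P Q by (intro integrable_double_sum integrable_Mmat) auto
  have int_W: "integrable muY (\<lambda>y. W y \<bullet> W y)"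
    and int_V: "integrable muY (\<lambda>y. V y \<bullet> V y)"
    and "integral\<^sup>L muY (\<lambda>y. W y \<bullet> W y) = grouped_sq_norm \<nu> a G P"
    and "integral\<^sup>L muY (\<lambda>y. V y \<bullet> V y) = grouped_sq_norm \<mu> b H Q"
    using integrable_norm_sum_tensL[OF P, of a G] integrable_norm_sum_tensL[OF Q, of b H]
      integral_norm_sum_tensL[OF P, of a G] integral_norm_sum_tensL[OF Q, of b H]
    unfolding W_def V_def power2_norm_eq_inner by auto
  have "(\<Sum>p\<in>P. \<Sum>q\<in>Q. a p * b q * (G p \<bullet> H q) * Mmat j (\<nu> p) (\<mu> q)) =
      integral\<^sup>L muY (\<lambda>y. y j * (W y \<bullet> V y))"
    unfolding WV Mmat_def using P Q by (subst integral_double_sum) (auto intro: integrable_Mmat)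
  also have "\<bar>\<dots>\<bar> \<le> integral\<^sup>L muY (\<lambda>y. (W y \<bullet> W y + V y \<bullet> V y) / 2)"
  proof (rule order_trans[OF integral_abs_bound integral_mono_AE])
    show "AE y in muY. \<bar>y j * (W y \<bullet> V y)\<bar> \<le> (W y \<bullet> W y + V y \<bullet> V y) / 2"
      using AE_muY_abs_le_1[of j]
    proof eventually_elim
      case (elim y)
      then have "\<bar>y j * (W y \<bullet> V y)\<bar> \<le> \<bar>W y \<bullet> V y\<bar>"
        by (simp add: abs_mult mult_left_le_one_le)
      then show ?case using abs_inner_le_half_sum_sq[of "W y" "V y"] by linarith
    qed
  qed (use int_WV int_W int_V in auto)
  also have "\<dots> = (grouped_sq_norm \<nu> a G P + grouped_sq_norm \<mu> b H Q) / 2"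
    using int_W int_V \<open>integral\<^sup>L muY (\<lambda>y. W y \<bullet> W y) = _\<close>
      \<open>integral\<^sup>L muY (\<lambda>y. V y \<bullet> V y) = _\<close> by simp
  finally show ?thesis .
qed

section \<open>Square-integrable gradients on \<open>D\<close>\<close>

lemma
  assumes "sq_int D f"
  shows measurable_indicator_scaleR_sq_int: "(\<lambda>x. indicator D x *\<^sub>R f x) \<in> borel_measurable lebesgue"
    and integrable_indicator_sq_norm: "integrable lebesgue (\<lambda>x. indicator D x * (norm (f x))\<^sup>2)"
  using assms unfolding sq_int_def set_borel_measurable_def set_integrable_def by auto

lemma integrable_indicator_inner:
  fixes f g :: "'a::euclidean_space \<Rightarrow> 'b::euclidean_space"
  assumes f: "sq_int D f" and g: "sq_int D g"
  shows "integrable lebesgue (\<lambda>x. indicator D x * (f x \<bullet> g x))"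
proof (rule Bochner_Integration.integrable_bound)
  show "integrable lebesgue
      (\<lambda>x. (indicator D x * (norm (f x))\<^sup>2 + indicator D x * (norm (g x))\<^sup>2) / 2)"
    using integrable_indicator_sq_norm[OF f] integrable_indicator_sq_norm[OF g] by auto
  have "(\<lambda>x. (indicator D x *\<^sub>R f x) \<bullet> (indicator D x *\<^sub>R g x)) \<in> borel_measurable lebesgue"
    using measurable_indicator_scaleR_sq_int[OF f] measurable_indicator_scaleR_sq_int[OF g]
    by measurable
  then show "(\<lambda>x. indicator D x * (f x \<bullet> g x)) \<in> borel_measurable lebesgue"
    by (rule measurable_cong[THEN iffD1, rotated]) (simp split: split_indicator)
  show "AE x in lebesgue. norm (indicator D x * (f x \<bullet> g x)) \<le>
      norm ((indicator D x * (norm (f x))\<^sup>2 + indicator D x * (norm (g x))\<^sup>2) / 2)"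
    using abs_inner_le_half_sum_sq[of "f x" "g x" for x]
    by (intro AE_I2) (auto split: split_indicator simp: power2_norm_eq_inner)
qed

lemma integrable_indicator_weighted_inner:
  fixes f g :: "'a::euclidean_space \<Rightarrow> 'b::euclidean_space"
  assumes f: "sq_int D f" and g: "sq_int D g" and h: "h \<in> borel_measurable lebesgue"
    and bound: "AE x in lebesgue. x \<in> D \<longrightarrow> \<bar>h x\<bar> \<le> B"
  shows "integrable lebesgue (\<lambda>x. indicator D x * (h x * (f x \<bullet> g x)))"
proof (rule Bochner_Integration.integrable_bound)
  show "integrable lebesgue (\<lambda>x. B * (indicator D x * (f x \<bullet> g x)))"
    using integrable_indicator_inner[OF f g] by simp
  have "(\<lambda>x. h x * (indicator D x * (f x \<bullet> g x))) \<in> borel_measurable lebesgue"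
    using h integrable_indicator_inner[OF f g] by measurable
  then show "(\<lambda>x. indicator D x * (h x * (f x \<bullet> g x))) \<in> borel_measurable lebesgue"
    by (simp add: ac_simps)
  show "AE x in lebesgue. norm (indicator D x * (h x * (f x \<bullet> g x))) \<le>
      norm (B * (indicator D x * (f x \<bullet> g x)))"
    using bound
  proof eventually_elim
    case (elim x)
    then show ?case
      by (auto split: split_indicator simp: abs_mult intro!: mult_right_mono)
  qed
qed

lemma integrable_indicator_norm_sum_sq:
  fixes G :: "'p \<Rightarrow> 'a::euclidean_space \<Rightarrow> 'b::euclidean_space"
  assumes P: "finite P" and sq: "\<And>p. p \<in> P \<Longrightarrow> sq_int D (G p)"
  shows "integrable lebesgue (\<lambda>x. indicator D x * (norm (\<Sum>p\<in>P. a p *\<^sub>R G p x))\<^sup>2)"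
proof -
  have "indicator D x * (norm (\<Sum>p\<in>P. a p *\<^sub>R G p x))\<^sup>2 =
      (\<Sum>p\<in>P. \<Sum>q\<in>P. (a p * a q) * (indicator D x * (G p x \<bullet> G q x)))" for x
    unfolding power2_norm_sum by (simp add: sum_distrib_left ac_simps)
  then show ?thesis
    using P sq by (simp add: integrable_double_sum integrable_indicator_inner)
qed

lemma integrable_indicator_grouped_sq_norm:
  fixes G :: "'p \<Rightarrow> 'a::euclidean_space \<Rightarrow> 'b::euclidean_space"
  assumes P: "finite P" and sq: "\<And>p. p \<in> P \<Longrightarrow> sq_int D (G p)"
  shows "integrable lebesgue (\<lambda>x. indicator D x * grouped_sq_norm k a (\<lambda>p. G p x) P)"
  unfolding grouped_sq_norm_def sum_distrib_left using P sq
  by (intro Bochner_Integration.integrable_sum integrable_indicator_norm_sum_sq) auto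

lemma integral_indicator_grouped_sq_norm_le:
  fixes w :: "'s \<times> 'k \<Rightarrow> real" and G :: "'s \<Rightarrow> 'a::euclidean_space \<Rightarrow> 'b::euclidean_space"
  assumes upper: "\<And>c. finite {l. c l \<noteq> 0} \<Longrightarrow> integral\<^sup>L lebesgue
      (\<lambda>x. indicator D x * (norm (\<Sum>l\<in>{l. c l \<noteq> 0}. c l *\<^sub>R G l x))\<^sup>2)
        \<le> C * (\<Sum>l\<in>{l. c l \<noteq> 0}. (c l)\<^sup>2)"
    and sq: "\<And>l. sq_int D (G l)" and fin: "finite {p. w p \<noteq> 0}"
  shows "integral\<^sup>L lebesgue (\<lambda>x. indicator D x * grouped_sq_norm snd w (\<lambda>p. G (fst p) x) {p. w p \<noteq> 0})
    \<le> C * (\<Sum>p\<in>{p. w p \<noteq> 0}. (w p)\<^sup>2)"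
proof -
  define P where "P = {p. w p \<noteq> 0}"
  have P: "finite P" using fin unfolding P_def .
  have fiber: "{p\<in>P. snd p = \<kappa>} = (\<lambda>l. (l, \<kappa>)) ` {l. w (l, \<kappa>) \<noteq> 0}" for \<kappa>
    unfolding P_def by auto
  have inj: "inj_on (\<lambda>l. (l, \<kappa>)) A" for \<kappa> and A :: "'s set"
    by (auto simp: inj_on_def)
  have fin_fiber: "finite {l. w (l, \<kappa>) \<noteq> 0}" for \<kappa>
  proof (rule finite_imageD[OF _ inj])
    show "finite ((\<lambda>l. (l, \<kappa>)) ` {l. w (l, \<kappa>) \<noteq> 0})"
      unfolding fiber[symmetric] using P by simp
  qed
  have "integral\<^sup>L lebesgue (\<lambda>x. indicator D x * grouped_sq_norm snd w (\<lambda>p. G (fst p) x) P) =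
      (\<Sum>\<kappa>\<in>snd ` P. integral\<^sup>L lebesgue
        (\<lambda>x. indicator D x * (norm (\<Sum>p\<in>{p\<in>P. snd p = \<kappa>}. w p *\<^sub>R G (fst p) x))\<^sup>2))"
    unfolding grouped_sq_norm_def sum_distrib_left using P sq
    by (intro Bochner_Integration.integral_sum integrable_indicator_norm_sum_sq) auto
  also have "\<dots> \<le> (\<Sum>\<kappa>\<in>snd ` P. C * (\<Sum>p\<in>{p\<in>P. snd p = \<kappa>}. (w p)\<^sup>2))"
  proof (rule sum_mono)
    fix \<kappa>
    show "integral\<^sup>L lebesgue
        (\<lambda>x. indicator D x * (norm (\<Sum>p\<in>{p\<in>P. snd p = \<kappa>}. w p *\<^sub>R G (fst p) x))\<^sup>2)
        \<le> C * (\<Sum>p\<in>{p\<in>P. snd p = \<kappa>}. (w p)\<^sup>2)"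
      using upper[OF fin_fiber[of \<kappa>]] unfolding fiber sum.reindex[OF inj] by simp
  qed
  also have "\<dots> = C * (\<Sum>p\<in>P. (w p)\<^sup>2)"
    unfolding sum_distrib_left[symmetric] using sum.image_gen[OF P, of "\<lambda>p. (w p)\<^sup>2" snd] by simp
  finally show ?thesis unfolding P_def .
qed

lemma integral_indicator_grouped_sq_norm_le_unit:
  fixes G :: "'s \<Rightarrow> 'a::euclidean_space \<Rightarrow> 'b::euclidean_space"
  assumes upper: "\<And>c. finite {l. c l \<noteq> 0} \<Longrightarrow> integral\<^sup>L lebesgue
      (\<lambda>x. indicator D x * (norm (\<Sum>l\<in>{l. c l \<noteq> 0}. c l *\<^sub>R G l x))\<^sup>2)
        \<le> C * (\<Sum>l\<in>{l. c l \<noteq> 0}. (c l)\<^sup>2)"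
    and C: "0 \<le> C" and sq: "\<And>l. sq_int D (G l)" and w: "fin_l2_unit w"
  shows "integral\<^sup>L lebesgue (\<lambda>x. indicator D x * grouped_sq_norm snd w (\<lambda>p. G (fst p) x) {p. w p \<noteq> 0})
    \<le> C"
proof -
  have fin: "finite {p. w p \<noteq> 0}" and unit: "(\<Sum>p\<in>{p. w p \<noteq> 0}. (w p)\<^sup>2) \<le> 1"
    using w unfolding fin_l2_unit_def by auto
  have "integral\<^sup>L lebesgue (\<lambda>x. indicator D x * grouped_sq_norm snd w (\<lambda>p. G (fst p) x) {p. w p \<noteq> 0})
      \<le> C * (\<Sum>p\<in>{p. w p \<noteq> 0}. (w p)\<^sup>2)"
    using upper sq fin by (rule integral_indicator_grouped_sq_norm_le)
  also have "\<dots> \<le> C" using unit C by (rule mult_left_le)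
  finally show ?thesis .
qed

lemma sq_int_wgrad_H10:
  assumes "u \<in> H10 D"
  shows "sq_int D (wgrad D u)"
proof -
  have "is_weak_grad D u (wgrad D u)"
    using assms unfolding H10_def wgrad_def by (auto intro: someI[where P="is_weak_grad D u"])
  then show ?thesis unfolding is_weak_grad_def by blast
qed

lemma sq_int_zero: "sq_int D (\<lambda>_. 0)"
  by (simp add: sq_int_def set_borel_measurable_def set_integrable_def)

lemma sq_int_wgrad_zero: "sq_int D (wgrad D (\<lambda>_. 0::real))"
proof -
  have "is_weak_grad D (\<lambda>_. 0::real) (\<lambda>_. 0)"
    unfolding is_weak_grad_def by (simp add: sq_int_zero set_lebesgue_integral_def)
  then have "is_weak_grad D (\<lambda>_. 0::real) (wgrad D (\<lambda>_. 0))"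
    unfolding wgrad_def by (metis someI)
  then show ?thesis unfolding is_weak_grad_def by blast
qed

lemma measurable_indicator_norm_diff_sum_sq:
  fixes f :: "'a::euclidean_space \<Rightarrow> 'b::euclidean_space"
  assumes f: "sq_int D f" and G: "\<And>l. sq_int D (G l)"
  shows "(\<lambda>x. indicator D x * (norm (f x - (\<Sum>l\<in>S. c l *\<^sub>R G l x)))\<^sup>2) \<in> borel_measurable lebesgue"
proof -
  have "(\<lambda>x. (norm (indicator D x *\<^sub>R f x - (\<Sum>l\<in>S. c l *\<^sub>R (indicator D x *\<^sub>R G l x))))\<^sup>2)
      \<in> borel_measurable lebesgue"
    using measurable_indicator_scaleR_sq_int[OF f] measurable_indicator_scaleR_sq_int[OF G]
    by measurable
  then show ?thesis
    by (rule measurable_cong[THEN iffD1, rotated]) (simp split: split_indicator)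
qed

text \<open>\<open>wgrad\<close> is a choice, so \<open>wgrad D (\<lambda>_. 0)\<close> need not be \<open>0\<close>; the Riesz upper bound at the
  zero coefficient vector forces it to vanish almost everywhere on \<open>D\<close>.\<close>

lemma riesz_basis_H10_wgrad_zero:
  assumes "riesz_basis_H10 D \<psi>"
  shows "AE x in lebesgue. x \<in> D \<longrightarrow> wgrad D (\<lambda>_. 0::real) x = 0"
proof -
  define g0 where "g0 = wgrad D (\<lambda>_. 0::real)"
  have int: "integrable lebesgue (\<lambda>x. indicator D x * (norm (g0 x))\<^sup>2)"
    unfolding g0_def by (rule integrable_indicator_sq_norm[OF sq_int_wgrad_zero])
  obtain c2 where "\<And>c. finite {l. c l \<noteq> 0} \<Longrightarrow>
      Vdist2 D (\<lambda>_. 0) \<psi> c \<le> c2 * (\<Sum>l\<in>{l. c l \<noteq> 0}. (c l)\<^sup>2)"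
    using assms unfolding riesz_basis_H10_def by blast
  from this[of "\<lambda>_. 0"] have "integral\<^sup>L lebesgue (\<lambda>x. indicator D x * (norm (g0 x))\<^sup>2) \<le> 0"
    unfolding Vdist2_def set_lebesgue_integral_def g0_def by simp
  moreover have "0 \<le> integral\<^sup>L lebesgue (\<lambda>x. indicator D x * (norm (g0 x))\<^sup>2)"
    by (rule integral_nonneg_AE) auto
  ultimately have "AE x in lebesgue. indicator D x * (norm (g0 x))\<^sup>2 = 0"
    using integral_nonneg_eq_0_iff_AE[OF int] by auto
  then show ?thesis unfolding g0_def[symmetric]
    by eventually_elim (auto split: split_indicator)
qed

lemma riesz_basis_H10_upper_bound:
  fixes D :: "'a::euclidean_space set" and \<psi> :: "'s \<Rightarrow> 'a \<Rightarrow> real"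
  assumes basis: "riesz_basis_H10 D \<psi>"
  obtains c2 where "0 < c2"
    "\<And>c. finite {l. c l \<noteq> 0} \<Longrightarrow> integral\<^sup>L lebesgue
      (\<lambda>x. indicator D x * (norm (\<Sum>l\<in>{l. c l \<noteq> 0}. c l *\<^sub>R wgrad D (\<psi> l) x))\<^sup>2)
        \<le> c2 * (\<Sum>l\<in>{l. c l \<noteq> 0}. (c l)\<^sup>2)"
proof -
  obtain c2 where c2: "0 < c2"
    "\<And>c. finite {l. c l \<noteq> 0} \<Longrightarrow> Vdist2 D (\<lambda>_. 0) \<psi> c \<le> c2 * (\<Sum>l\<in>{l. c l \<noteq> 0}. (c l)\<^sup>2)"
    using basis unfolding riesz_basis_H10_def by blast
  have sq: "sq_int D (wgrad D (\<psi> l))" for l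
    using basis unfolding riesz_basis_H10_def by (blast intro: sq_int_wgrad_H10)
  have "Vdist2 D (\<lambda>_. 0) \<psi> c = integral\<^sup>L lebesgue
      (\<lambda>x. indicator D x * (norm (0 - (\<Sum>l\<in>{l. c l \<noteq> 0}. c l *\<^sub>R wgrad D (\<psi> l) x)))\<^sup>2)" for c
    unfolding Vdist2_def set_lebesgue_integral_def
    using measurable_indicator_norm_diff_sum_sq[OF sq_int_wgrad_zero sq]
      measurable_indicator_norm_diff_sum_sq[OF sq_int_zero sq]
    by (intro integral_cong_AE) (use riesz_basis_H10_wgrad_zero[OF basis] in \<open>auto elim!: AE_mp\<close>)
  then show ?thesis using c2 that by simp
qed

section \<open>Multilevel coefficients\<close>

lemma sum_power_le_geometric:
  fixes r :: real
  assumes F: "finite F" "\<And>l. l \<in> F \<Longrightarrow> L \<le> l" and r: "0 \<le> r" "r < 1"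
  shows "(\<Sum>l\<in>F. r ^ l) \<le> r ^ L / (1 - r)"
proof (cases "F = {}")
  case True
  then show ?thesis using r by simp
next
  case False
  define N where "N = Max F"
  have F_sub: "F \<subseteq> {L..N}" and "L \<le> N"
    using F False unfolding N_def by auto
  have "(\<Sum>l\<in>F. r ^ l) \<le> (\<Sum>l\<in>{L..N}. r ^ l)"
    using F_sub r by (intro sum_mono2) auto
  also have "\<dots> = (r ^ L - r ^ Suc N) / (1 - r)"
    using sum_gp_multiplied[OF \<open>L \<le> N\<close>, of r] r by (simp add: field_simps)
  also have "\<dots> \<le> r ^ L / (1 - r)"
    using r by (intro divide_right_mono) auto
  finally show ?thesis .
qed

lemma two_powr_neg_mult: "2 powr (- \<alpha> * real n) = (2 powr (- \<alpha>)) ^ n"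
  by (simp add: powr_realpow[symmetric] powr_powr)

lemma sum_level_weighted_le:
  fixes lv :: "'j \<Rightarrow> nat" and f :: "'j \<Rightarrow> real" and r :: real
  assumes J: "finite J" "\<And>j. j \<in> J \<Longrightarrow> L \<le> lv j" and f: "\<And>j. j \<in> J \<Longrightarrow> \<bar>f j\<bar> \<le> 1"
    and K: "\<And>l. card {j\<in>J. lv j = l \<and> f j \<noteq> 0} \<le> K" and r: "0 \<le> r" "r < 1"
  shows "(\<Sum>j\<in>J. r ^ lv j * \<bar>f j\<bar>) \<le> real K * r ^ L / (1 - r)"
proof -
  have "(\<Sum>j\<in>J. r ^ lv j * \<bar>f j\<bar>) = (\<Sum>l\<in>lv ` J. \<Sum>j\<in>{j\<in>J. lv j = l}. r ^ lv j * \<bar>f j\<bar>)"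
    using J(1) by (rule sum.image_gen)
  also have "\<dots> \<le> (\<Sum>l\<in>lv ` J. real K * r ^ l)"
  proof (rule sum_mono)
    fix l
    have "(\<Sum>j\<in>{j\<in>J. lv j = l}. r ^ lv j * \<bar>f j\<bar>) \<le>
        (\<Sum>j\<in>{j\<in>J. lv j = l}. if f j \<noteq> 0 then r ^ l else 0)"
      using f r by (intro sum_mono) (auto intro: mult_left_le)
    also have "\<dots> = r ^ l * real (card {j\<in>J. lv j = l \<and> f j \<noteq> 0})"
    proof -
      have "{j\<in>J. lv j = l} \<inter> {j. f j \<noteq> 0} = {j\<in>J. lv j = l \<and> f j \<noteq> 0}" by auto
      then show ?thesis using J(1) by (simp add: sum.If_cases)
    qed
    also have "\<dots> \<le> real K * r ^ l"
      using K[of l] r by (subst mult.commute) (intro mult_left_mono; simp)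
    finally show "(\<Sum>j\<in>{j\<in>J. lv j = l}. r ^ lv j * \<bar>f j\<bar>) \<le> real K * r ^ l" .
  qed
  also have "\<dots> \<le> real K * (r ^ L / (1 - r))"
    unfolding sum_distrib_left[symmetric] using J r
    by (intro mult_left_mono sum_power_le_geometric) auto
  finally show ?thesis by simp
qed

lemma card_enum_level_le:
  assumes enum: "inj enum" "range enum \<subseteq> Lam"
    and K: "finite {\<mu>\<in>Lam. lev \<mu> = l \<and> \<xi> \<mu> x \<noteq> 0}" "card {\<mu>\<in>Lam. lev \<mu> = l \<and> \<xi> \<mu> x \<noteq> 0} \<le> K"
  shows "card {j\<in>J. lev (enum j) = l \<and> \<xi> (enum j) x \<noteq> 0} \<le> K"
proof -
  have "inj_on enum {j\<in>J. lev (enum j) = l \<and> \<xi> (enum j) x \<noteq> 0}"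
    "enum ` {j\<in>J. lev (enum j) = l \<and> \<xi> (enum j) x \<noteq> 0} \<subseteq> {\<mu>\<in>Lam. lev \<mu> = l \<and> \<xi> \<mu> x \<noteq> 0}"
    using enum by (auto intro: inj_on_subset)
  then show ?thesis using K card_inj_on_le le_trans by blast
qed

lemma sum_abs_multilevel_le:
  fixes \<xi> :: "'l \<Rightarrow> 'x \<Rightarrow> real" and lev :: "'l \<Rightarrow> nat"
  assumes enum: "inj enum" "range enum \<subseteq> Lam" "mono (lev \<circ> enum)"
    and K: "\<And>l. finite {\<mu>\<in>Lam. lev \<mu> = l \<and> \<xi> \<mu> x \<noteq> 0} \<and> card {\<mu>\<in>Lam. lev \<mu> = l \<and> \<xi> \<mu> x \<noteq> 0} \<le> K"
    and J: "finite J" "J \<subseteq> {M..}" and \<xi>_le_1: "\<And>j. j \<in> J \<Longrightarrow> \<bar>\<xi> (enum j) x\<bar> \<le> 1"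
    and \<alpha>: "\<alpha> > 0"
  shows "(\<Sum>j\<in>J. \<bar>2 powr (- \<alpha> * real (lev (enum j))) * \<xi> (enum j) x\<bar>) \<le>
    real K * 2 powr (- \<alpha> * real (lev (enum M))) / (1 - 2 powr (- \<alpha>))"
proof -
  have "2 powr (- \<alpha>) < 2 powr 0" using \<alpha> by (intro powr_less_mono) auto
  then have r: "0 \<le> 2 powr (- \<alpha>)" "2 powr (- \<alpha>) < 1" by auto
  have "(\<Sum>j\<in>J. (2 powr (- \<alpha>)) ^ lev (enum j) * \<bar>\<xi> (enum j) x\<bar>) \<le>
      real K * (2 powr (- \<alpha>)) ^ lev (enum M) / (1 - 2 powr (- \<alpha>))"
  proof (rule sum_level_weighted_le[where lv="\<lambda>j. lev (enum j)" and f="\<lambda>j. \<xi> (enum j) x"])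
    show "card {j\<in>J. lev (enum j) = l \<and> \<xi> (enum j) x \<noteq> 0} \<le> K" for l
      using K[of l] by (intro card_enum_level_le[OF enum(1,2)]) auto
  qed (use J enum(3) \<xi>_le_1 r in \<open>auto simp: mono_def\<close>)
  then show ?thesis unfolding two_powr_neg_mult[symmetric] by (simp add: abs_mult)
qed

lemma card_level_set_ge:
  fixes lev :: "'l \<Rightarrow> nat"
  assumes enum: "inj enum" "range enum \<subseteq> Lam" "mono (lev \<circ> enum)"
    and fin: "finite {\<mu>\<in>Lam. lev \<mu> \<le> lev (enum M)}"
  shows "Suc M \<le> card {\<mu>\<in>Lam. lev \<mu> \<le> lev (enum M)}"
proof -
  have "enum ` {..M} \<subseteq> {\<mu>\<in>Lam. lev \<mu> \<le> lev (enum M)}"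
    using enum unfolding mono_def by auto
  then have "card (enum ` {..M}) \<le> card {\<mu>\<in>Lam. lev \<mu> \<le> lev (enum M)}"
    using fin by (rule card_mono[rotated])
  moreover have "card (enum ` {..M}) = Suc M"
    using enum(1) by (simp add: card_image inj_on_subset)
  ultimately show ?thesis by simp
qed

text \<open>Since at most \<open>C 2\<^bsup>m l\<^esup>\<close> functions have level \<open>\<le> l\<close>, the \<open>M\<close>-th one has level
  \<open>l\<close> with \<open>2\<^bsup>-l\<^esup> \<lesssim> M\<^bsup>-1/m\<^esup>\<close>.\<close>

lemma multilevel_level_decay:
  fixes D :: "'a::euclidean_space set"
  assumes ml: "multilevel D Lam lev \<xi> enum" and \<alpha>: "0 \<le> \<alpha>"
  obtains C where "0 < C"
    "\<And>M. M \<ge> 1 \<Longrightarrow> 2 powr (- \<alpha> * real (lev (enum M))) \<le> C * real M powr (- \<alpha> / real DIM('a))"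
proof -
  define m where "m = real DIM('a)"
  have m: "0 < m" unfolding m_def by simp
  obtain Cc where Cc: "\<And>l. finite {\<mu>\<in>Lam. lev \<mu> \<le> l}"
    "\<And>l. real (card {\<mu>\<in>Lam. lev \<mu> \<le> l}) \<le> Cc * 2 powr (m * real l)"
    using ml unfolding multilevel_def m_def by blast
  have enum: "inj enum" "range enum \<subseteq> Lam" "mono (lev \<circ> enum)"
    using ml unfolding multilevel_def by (auto dest: bij_betw_imp_inj_on bij_betw_imp_surj_on)
  have count: "real (Suc M) \<le> Cc * 2 powr (m * real (lev (enum M)))" for M
    using card_level_set_ge[OF enum Cc(1)] Cc(2)[of "lev (enum M)"] of_nat_mono order_trans by blast
  have "0 < Cc * 2 powr (m * real (lev (enum 0)))" using count[of 0] by linarith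
  then have Cc_pos: "0 < Cc" by (simp add: zero_less_mult_iff)
  show ?thesis
  proof (rule that[of "Cc powr (\<alpha> / m)"])
    show "0 < Cc powr (\<alpha> / m)" using Cc_pos by simp
    fix M :: nat assume "M \<ge> 1"
    define L where "L = real (lev (enum M))"
    have M_le: "real M / Cc \<le> 2 powr (m * L)"
      using count[of M] Cc_pos unfolding L_def by (simp add: field_simps)
    have "2 powr (- \<alpha> * L) = (2 powr (m * L)) powr (- \<alpha> / m)"
      using m by (simp add: powr_powr mult.commute)
    also have "\<dots> \<le> (real M / Cc) powr (- \<alpha> / m)"
      using \<alpha> m M_le \<open>M \<ge> 1\<close> Cc_pos by (intro powr_mono2') auto
    also have "\<dots> = real M powr (- \<alpha> / m) / Cc powr (- \<alpha> / m)"
      using Cc_pos by (simp add: powr_divide)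
    also have "\<dots> = Cc powr (\<alpha> / m) * real M powr (- \<alpha> / m)"
      using powr_minus[of Cc "\<alpha> / m"] by (simp add: divide_inverse)
    finally show "2 powr (- \<alpha> * real (lev (enum M))) \<le> Cc powr (\<alpha> / m) * real M powr (- \<alpha> / real DIM('a))"
      unfolding L_def m_def .
  qed
qed

lemma multilevel_AE_abs_le_1:
  fixes D :: "'a::euclidean_space set"
  assumes ml: "multilevel D Lam lev \<xi> enum" and D: "D \<in> sets lebesgue"
  shows "AE x in lebesgue. x \<in> D \<longrightarrow> (\<forall>j. \<bar>\<xi> (enum j) x\<bar> \<le> 1)"
proof -
  have "AE x in lebesgue. x \<in> D \<longrightarrow> \<bar>\<xi> (enum j) x\<bar> \<le> 1" for j
  proof -
    have "enum j \<in> Lam" using ml unfolding multilevel_def by (auto dest: bij_betwE)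
    then have "esssup (restrict_space lebesgue D) (\<lambda>x. ereal \<bar>\<xi> (enum j) x\<bar>) = 1"
      using ml unfolding multilevel_def by blast
    then have "AE x in restrict_space lebesgue D. \<bar>\<xi> (enum j) x\<bar> \<le> 1"
      using esssup_AE[of "\<lambda>x. ereal \<bar>\<xi> (enum j) x\<bar>" "restrict_space lebesgue D"] by simp
    then show ?thesis using D by (simp add: AE_restrict_space_iff)
  qed
  then have "AE x in lebesgue. \<forall>j. x \<in> D \<longrightarrow> \<bar>\<xi> (enum j) x\<bar> \<le> 1"
    unfolding AE_all_countable by blast
  then show ?thesis by eventually_elim auto
qed

lemma multilevel_tail_sum_bound:
  fixes D :: "'a::euclidean_space set"
  assumes ml: "multilevel D Lam lev \<xi> enum" and D: "D \<in> sets lebesgue" and \<alpha>: "\<alpha> > 0"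
  obtains C where "0 < C" "\<And>M. M \<ge> 1 \<Longrightarrow> AE x in lebesgue. x \<in> D \<longrightarrow>
    (\<forall>J. finite J \<longrightarrow> J \<subseteq> {M..} \<longrightarrow>
      (\<Sum>j\<in>J. \<bar>2 powr (- \<alpha> * real (lev (enum j))) * \<xi> (enum j) x\<bar>) \<le> C * real M powr (- \<alpha> / real DIM('a)))"
proof -
  obtain Cd where Cd: "0 < Cd"
    "\<And>M. M \<ge> 1 \<Longrightarrow> 2 powr (- \<alpha> * real (lev (enum M))) \<le> Cd * real M powr (- \<alpha> / real DIM('a))"
    using multilevel_level_decay[OF ml less_imp_le[OF \<alpha>]] by blast
  obtain K where K: "\<And>x l. x \<in> D \<Longrightarrow> finite {\<mu>\<in>Lam. lev \<mu> = l \<and> \<xi> \<mu> x \<noteq> 0} \<and>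
      card {\<mu>\<in>Lam. lev \<mu> = l \<and> \<xi> \<mu> x \<noteq> 0} \<le> K"
    using ml unfolding multilevel_def by blast
  have enum: "inj enum" "range enum \<subseteq> Lam" "mono (lev \<circ> enum)"
    using ml unfolding multilevel_def by (auto dest: bij_betw_imp_inj_on bij_betw_imp_surj_on)
  define r where "r = 2 powr (- \<alpha>)"
  have "r < 2 powr 0" unfolding r_def using \<alpha> by (intro powr_less_mono) auto
  then have r: "0 < 1 - r" by simp
  show ?thesis
  proof (rule that[of "(real K + 1) * Cd / (1 - r)"])
    show "0 < (real K + 1) * Cd / (1 - r)" using Cd r by simp
    fix M :: nat assume M: "M \<ge> 1"
    show "AE x in lebesgue. x \<in> D \<longrightarrow> (\<forall>J. finite J \<longrightarrow> J \<subseteq> {M..} \<longrightarrow>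
      (\<Sum>j\<in>J. \<bar>2 powr (- \<alpha> * real (lev (enum j))) * \<xi> (enum j) x\<bar>)
        \<le> (real K + 1) * Cd / (1 - r) * real M powr (- \<alpha> / real DIM('a)))"
      using multilevel_AE_abs_le_1[OF ml D]
    proof (eventually_elim, intro impI allI)
      fix x and J :: "nat set"
      assume x: "x \<in> D" and \<xi>_le_1: "x \<in> D \<longrightarrow> (\<forall>j. \<bar>\<xi> (enum j) x\<bar> \<le> 1)"
        and J: "finite J" "J \<subseteq> {M..}"
      have "(\<Sum>j\<in>J. \<bar>2 powr (- \<alpha> * real (lev (enum j))) * \<xi> (enum j) x\<bar>)
          \<le> real K * 2 powr (- \<alpha> * real (lev (enum M))) / (1 - r)"
        unfolding r_def
        by (rule sum_abs_multilevel_le[where \<xi>=\<xi> and x=x, OF enum K[OF x] J])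
           (use \<xi>_le_1 x \<alpha> in auto)
      also have "\<dots> \<le> (real K + 1) * (Cd * real M powr (- \<alpha> / real DIM('a))) / (1 - r)"
        using Cd(2)[OF M] Cd(1) r by (intro divide_right_mono mult_mono) auto
      finally show "(\<Sum>j\<in>J. \<bar>2 powr (- \<alpha> * real (lev (enum j))) * \<xi> (enum j) x\<bar>)
          \<le> (real K + 1) * Cd / (1 - r) * real M powr (- \<alpha> / real DIM('a))"
        by simp
    qed
  qed
qed

section \<open>The tail of the operator series\<close>

lemma abs_sum_weighted_Mmat_bilinear_le:
  fixes G :: "'p \<Rightarrow> 'v::real_inner" and H :: "'q \<Rightarrow> 'v"
  assumes P: "finite P" "\<nu> ` P \<subseteq> Fidx" and Q: "finite Q" "\<mu> ` Q \<subseteq> Fidx"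
  shows "\<bar>\<Sum>j\<in>JS. t j * (\<Sum>p\<in>P. \<Sum>q\<in>Q. a p * b q * (G p \<bullet> H q) * Mmat j (\<nu> p) (\<mu> q))\<bar> \<le>
    (\<Sum>j\<in>JS. \<bar>t j\<bar>) * ((grouped_sq_norm \<nu> a G P + grouped_sq_norm \<mu> b H Q) / 2)"
proof -
  have "\<bar>\<Sum>j\<in>JS. t j * (\<Sum>p\<in>P. \<Sum>q\<in>Q. a p * b q * (G p \<bullet> H q) * Mmat j (\<nu> p) (\<mu> q))\<bar> \<le>
      (\<Sum>j\<in>JS. \<bar>t j\<bar> * \<bar>\<Sum>p\<in>P. \<Sum>q\<in>Q. a p * b q * (G p \<bullet> H q) * Mmat j (\<nu> p) (\<mu> q)\<bar>)"
    by (rule order_trans[OF sum_abs]) (simp add: abs_mult)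
  also have "\<dots> \<le> (\<Sum>j\<in>JS. \<bar>t j\<bar> * ((grouped_sq_norm \<nu> a G P + grouped_sq_norm \<mu> b H Q) / 2))"
    by (intro sum_mono mult_left_mono abs_Mmat_bilinear_le P Q abs_ge_zero)
  finally show ?thesis unfolding sum_distrib_right .
qed

lemma tail_entry_eq_finite_sum:
  assumes P: "finite P" "snd ` P \<subseteq> Fidx"
  obtains JM where "finite JM" "JM \<subseteq> {M..}"
    "\<And>p q. p \<in> P \<Longrightarrow> q \<in> P \<Longrightarrow>
      tail_entry A M p q = (\<Sum>j\<in>JM. A j (fst p) (fst q) * Mmat j (snd p) (snd q))"
proof -
  define J where "J = (\<Union>p\<in>P. {j. snd p j \<noteq> 0})"
  have J: "finite J" unfolding J_def using P by (intro finite_UN_I) (auto simp: Fidx_def)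
  show ?thesis
  proof (rule that[of "{j\<in>J. M \<le> j}"])
    fix p q assume pq: "p \<in> P" "q \<in> P"
    then have "snd p \<in> Fidx" "snd q \<in> Fidx" using P by auto
    then have "tail_entry A M p q =
        (\<Sum>j\<in>J. if M \<le> j then A j (fst p) (fst q) * Mmat j (snd p) (snd q) else 0)"
      unfolding tail_entry_def using J pq Mmat_eq_0 by (intro suminf_finite) (auto simp: J_def)
    then show "tail_entry A M p q = (\<Sum>j\<in>{j\<in>J. M \<le> j}. A j (fst p) (fst q) * Mmat j (snd p) (snd q))"
      by (simp add: sum.inter_filter[OF J])
  qed (use J in auto)
qed

lemma
  fixes D :: "'a::euclidean_space set" and \<psi> :: "'s \<Rightarrow> 'a \<Rightarrow> real" and \<theta> :: "nat \<Rightarrow> 'a \<Rightarrow> real"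
    and a b :: "'s \<times> (nat \<Rightarrow> nat) \<Rightarrow> real"
  assumes fin: "finite JS" "finite P" "finite Q"
    and sq: "\<And>l. sq_int D (wgrad D (\<psi> l))" and meas: "\<And>j. \<theta> j \<in> borel_measurable lebesgue"
    and bound: "\<And>j. j \<in> JS \<Longrightarrow> AE x in lebesgue. x \<in> D \<longrightarrow> \<bar>\<theta> j x\<bar> \<le> B"
  defines "E \<equiv> \<lambda>j x. \<Sum>p\<in>P. \<Sum>q\<in>Q. a p * b q *
      (wgrad D (\<psi> (fst p)) x \<bullet> wgrad D (\<psi> (fst q)) x) * Mmat j (snd p) (snd q)"
  shows integrable_Amat_Mmat_form: "integrable lebesgue (\<lambda>x. indicator D x * (\<Sum>j\<in>JS. \<theta> j x * E j x))"
    and Amat_Mmat_form_eq_integral: "(\<Sum>p\<in>P. \<Sum>q\<in>Q.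
        a p * (\<Sum>j\<in>JS. Amat D \<psi> (\<theta> j) (fst p) (fst q) * Mmat j (snd p) (snd q)) * b q) =
      integral\<^sup>L lebesgue (\<lambda>x. indicator D x * (\<Sum>j\<in>JS. \<theta> j x * E j x))"
proof -
  define F where "F j p q x = indicator D x * (\<theta> j x * (wgrad D (\<psi> (fst q)) x \<bullet> wgrad D (\<psi> (fst p)) x))"
    for j and p q :: "'s \<times> (nat \<Rightarrow> nat)" and x
  define c where "c j p q = a p * b q * Mmat j (snd p) (snd q)" for j p q
  have F: "integrable lebesgue (F j p q)" if "j \<in> JS" for j p q
    unfolding F_def by (rule integrable_indicator_weighted_inner[OF sq sq meas bound[OF that]])
  have integrand: "indicator D x * (\<Sum>j\<in>JS. \<theta> j x * E j x) = (\<Sum>j\<in>JS. \<Sum>p\<in>P. \<Sum>q\<in>Q. c j p q * F j p q x)" for x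
    unfolding E_def c_def F_def by (simp add: sum_distrib_left ac_simps inner_commute)
  show "integrable lebesgue (\<lambda>x. indicator D x * (\<Sum>j\<in>JS. \<theta> j x * E j x))"
    unfolding integrand using fin F
    by (intro Bochner_Integration.integrable_sum integrable_double_sum) auto
  have "(\<Sum>p\<in>P. \<Sum>q\<in>Q. a p * (\<Sum>j\<in>JS. Amat D \<psi> (\<theta> j) (fst p) (fst q) * Mmat j (snd p) (snd q)) * b q) =
      (\<Sum>j\<in>JS. \<Sum>p\<in>P. \<Sum>q\<in>Q. c j p q * integral\<^sup>L lebesgue (F j p q))"
    unfolding c_def F_def Amat_def set_lebesgue_integral_def
    by (simp add: sum_distrib_left sum_distrib_right ac_simps sum.swap[of _ JS])
  also have "\<dots> = integral\<^sup>L lebesgue (\<lambda>x. \<Sum>j\<in>JS. \<Sum>p\<in>P. \<Sum>q\<in>Q. c j p q * F j p q x)"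
    using fin F by (simp add: Bochner_Integration.integral_sum integrable_double_sum integral_double_sum)
  finally show "(\<Sum>p\<in>P. \<Sum>q\<in>Q.
        a p * (\<Sum>j\<in>JS. Amat D \<psi> (\<theta> j) (fst p) (fst q) * Mmat j (snd p) (snd q)) * b q) =
      integral\<^sup>L lebesgue (\<lambda>x. indicator D x * (\<Sum>j\<in>JS. \<theta> j x * E j x))"
    unfolding integrand .
qed

lemma abs_integral_le_mean_bound:
  fixes f g h :: "'a \<Rightarrow> real"
  assumes f: "integrable M f" and g: "integrable M g" and h: "integrable M h"
    and bound: "AE x in M. \<bar>f x\<bar> \<le> \<rho> * ((g x + h x) / 2)"
    and le: "integral\<^sup>L M g \<le> c" "integral\<^sup>L M h \<le> c" and \<rho>: "0 \<le> \<rho>"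
  shows "\<bar>integral\<^sup>L M f\<bar> \<le> c * \<rho>"
proof -
  have "\<bar>integral\<^sup>L M f\<bar> \<le> integral\<^sup>L M (\<lambda>x. \<rho> * ((g x + h x) / 2))"
    using f g h bound by (intro order_trans[OF integral_abs_bound integral_mono_AE]) auto
  also have "\<dots> = \<rho> / 2 * (integral\<^sup>L M g + integral\<^sup>L M h)"
    using g h by (simp add: field_simps)
  also have "\<dots> \<le> \<rho> / 2 * (c + c)"
    using le \<rho> by (intro mult_left_mono add_mono) auto
  finally show ?thesis by (simp add: mult.commute)
qed

lemma abs_bilinear_tail_Amat_le:
  fixes D :: "'a::euclidean_space set" and \<psi> :: "'s \<Rightarrow> 'a \<Rightarrow> real" and \<theta> :: "nat \<Rightarrow> 'a \<Rightarrow> real"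
  assumes H10: "\<And>l. \<psi> l \<in> H10 D"
    and upper: "\<And>c. finite {l. c l \<noteq> 0} \<Longrightarrow> integral\<^sup>L lebesgue
      (\<lambda>x. indicator D x * (norm (\<Sum>l\<in>{l. c l \<noteq> 0}. c l *\<^sub>R wgrad D (\<psi> l) x))\<^sup>2)
        \<le> c2 * (\<Sum>l\<in>{l. c l \<noteq> 0}. (c l)\<^sup>2)"
    and c2: "0 \<le> c2"
    and meas: "\<And>j. \<theta> j \<in> borel_measurable lebesgue"
    and tail: "AE x in lebesgue. x \<in> D \<longrightarrow>
      (\<forall>J. finite J \<longrightarrow> J \<subseteq> {M..} \<longrightarrow> (\<Sum>j\<in>J. \<bar>\<theta> j x\<bar>) \<le> \<rho>)"
    and \<rho>: "0 \<le> \<rho>"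
    and v: "fin_l2_unit v" and w: "fin_l2_unit w"
  shows "\<bar>\<Sum>p\<in>{p. w p \<noteq> 0}. \<Sum>q\<in>{q. v q \<noteq> 0}.
    w p * tail_entry (\<lambda>j. Amat D \<psi> (\<theta> j)) M p q * v q\<bar> \<le> c2 * \<rho>"
proof -
  define Pw Pv where "Pw = {p. w p \<noteq> 0}" and "Pv = {q. v q \<noteq> 0}"
  have Pw: "finite Pw" "snd ` Pw \<subseteq> Fidx" and Pv: "finite Pv" "snd ` Pv \<subseteq> Fidx"
    using v w unfolding fin_l2_unit_def Pw_def Pv_def by auto
  obtain JM where JM: "finite JM" "JM \<subseteq> {M..}" and tail_entry:
    "\<And>p q. p \<in> Pw \<union> Pv \<Longrightarrow> q \<in> Pw \<union> Pv \<Longrightarrow> tail_entry (\<lambda>j. Amat D \<psi> (\<theta> j)) M p q =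
      (\<Sum>j\<in>JM. Amat D \<psi> (\<theta> j) (fst p) (fst q) * Mmat j (snd p) (snd q))"
  proof (rule tail_entry_eq_finite_sum[where P="Pw \<union> Pv" and M=M and A="\<lambda>j. Amat D \<psi> (\<theta> j)"])
    show "finite (Pw \<union> Pv)" "snd ` (Pw \<union> Pv) \<subseteq> Fidx" using Pw Pv by auto
  qed blast
  define g where "g l = wgrad D (\<psi> l)" for l
  have sq: "sq_int D (g l)" for l unfolding g_def by (rule sq_int_wgrad_H10[OF H10])
  define N where "N u P x = indicator D x * grouped_sq_norm snd u (\<lambda>p. g (fst p) x) P"
    for u :: "'s \<times> (nat \<Rightarrow> nat) \<Rightarrow> real" and P x
  define E where "E j x = (\<Sum>p\<in>Pw. \<Sum>q\<in>Pv. w p * v q * (g (fst p) x \<bullet> g (fst q) x) * Mmat j (snd p) (snd q))"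
    for j x
  have \<theta>_bound: "AE x in lebesgue. x \<in> D \<longrightarrow> \<bar>\<theta> j x\<bar> \<le> \<rho>" if "j \<in> JM" for j
    using tail by eventually_elim (use that JM in \<open>auto dest: spec[of _ "{j}"]\<close>)
  have "(\<Sum>p\<in>Pw. \<Sum>q\<in>Pv. w p * tail_entry (\<lambda>j. Amat D \<psi> (\<theta> j)) M p q * v q) =
      (\<Sum>p\<in>Pw. \<Sum>q\<in>Pv. w p * (\<Sum>j\<in>JM. Amat D \<psi> (\<theta> j) (fst p) (fst q) * Mmat j (snd p) (snd q)) * v q)"
    by (intro sum.cong refl) (simp add: tail_entry)
  also have "\<dots> = integral\<^sup>L lebesgue (\<lambda>x. indicator D x * (\<Sum>j\<in>JM. \<theta> j x * E j x))"
    unfolding E_def g_def using JM Pw Pv sq meas \<theta>_bound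
    by (intro Amat_Mmat_form_eq_integral) (auto simp: g_def)
  also have "\<bar>\<dots>\<bar> \<le> c2 * \<rho>"
  proof (rule abs_integral_le_mean_bound[OF _ _ _ _ _ _ \<rho>])
    show "integrable lebesgue (\<lambda>x. indicator D x * (\<Sum>j\<in>JM. \<theta> j x * E j x))"
      unfolding E_def g_def using JM Pw Pv sq meas \<theta>_bound
      by (intro integrable_Amat_Mmat_form) (auto simp: g_def)
    show "integrable lebesgue (N w Pw)" "integrable lebesgue (N v Pv)"
      unfolding N_def using Pw Pv sq
      by (auto intro!: integrable_indicator_grouped_sq_norm[where G="\<lambda>p. g (fst p)"])
    show "integral\<^sup>L lebesgue (N w Pw) \<le> c2" "integral\<^sup>L lebesgue (N v Pv) \<le> c2"
      unfolding N_def Pw_def Pv_def using upper[folded g_def] c2 sq v w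
      by (auto intro!: integral_indicator_grouped_sq_norm_le_unit)
    show "AE x in lebesgue. \<bar>indicator D x * (\<Sum>j\<in>JM. \<theta> j x * E j x)\<bar> \<le> \<rho> * ((N w Pw x + N v Pv x) / 2)"
      using tail
    proof eventually_elim
      case (elim x)
      have "\<bar>\<Sum>j\<in>JM. \<theta> j x * E j x\<bar> \<le> (\<Sum>j\<in>JM. \<bar>\<theta> j x\<bar>) *
          ((grouped_sq_norm snd w (\<lambda>p. g (fst p) x) Pw + grouped_sq_norm snd v (\<lambda>p. g (fst p) x) Pv) / 2)"
        unfolding E_def using Pw Pv by (intro abs_sum_weighted_Mmat_bilinear_le) auto
      also have "\<dots> \<le> \<rho> *
          ((grouped_sq_norm snd w (\<lambda>p. g (fst p) x) Pw + grouped_sq_norm snd v (\<lambda>p. g (fst p) x) Pv) / 2)"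
        if "x \<in> D" using elim that JM by (intro mult_right_mono) (auto simp: grouped_sq_norm_nonneg)
      finally show ?case unfolding N_def by (auto split: split_indicator simp: abs_mult)
    qed
  qed
  finally show ?thesis unfolding Pw_def Pv_def .
qed

lemma tail_norm_Amat_le:
  fixes D :: "'a::euclidean_space set" and \<psi> :: "'s \<Rightarrow> 'a \<Rightarrow> real" and \<theta> :: "nat \<Rightarrow> 'a \<Rightarrow> real"
  assumes H10: "\<And>l. \<psi> l \<in> H10 D"
    and upper: "\<And>c. finite {l. c l \<noteq> 0} \<Longrightarrow> integral\<^sup>L lebesgue
      (\<lambda>x. indicator D x * (norm (\<Sum>l\<in>{l. c l \<noteq> 0}. c l *\<^sub>R wgrad D (\<psi> l) x))\<^sup>2)
        \<le> c2 * (\<Sum>l\<in>{l. c l \<noteq> 0}. (c l)\<^sup>2)"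
    and c2: "0 \<le> c2"
    and meas: "\<And>j. \<theta> j \<in> borel_measurable lebesgue"
    and tail: "AE x in lebesgue. x \<in> D \<longrightarrow>
      (\<forall>J. finite J \<longrightarrow> J \<subseteq> {M..} \<longrightarrow> (\<Sum>j\<in>J. \<bar>\<theta> j x\<bar>) \<le> \<rho>)"
    and \<rho>: "0 \<le> \<rho>"
  shows "tail_norm (\<lambda>j. Amat D \<psi> (\<theta> j)) M \<le> ereal (c2 * \<rho>)"
  unfolding tail_norm_def
  using abs_bilinear_tail_Amat_le[OF H10 upper c2 meas tail \<rho>] by (intro SUP_least) auto

theorem mainTheorem2:
  fixes D :: "'a::euclidean_space set"
    and \<psi> :: "'s \<Rightarrow> 'a \<Rightarrow> real"
    and Lam :: "'l set" and lev :: "'l \<Rightarrow> nat" and \<xi> :: "'l \<Rightarrow> 'a \<Rightarrow> real"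
    and enum :: "nat \<Rightarrow> 'l" and \<alpha> :: real
  assumes D: "open D" "connected D" "bounded D" "D \<noteq> {}"
    and basis: "riesz_basis_H10 D \<psi>"
    and ml: "multilevel D Lam lev \<xi> enum"
    and alpha: "\<alpha> > 0"
  defines "\<theta> \<equiv> (\<lambda>j x. 2 powr (- \<alpha> * real (lev (enum j))) * \<xi> (enum j) x)"
  shows "\<exists>C>0. \<forall>M::nat. M \<ge> 1 \<longrightarrow>
           tail_norm (\<lambda>j. Amat D \<psi> (\<theta> j)) M \<le> ereal (C * real M powr (- \<alpha> / real DIM('a)))"
proof -
  obtain c2 where c2: "0 < c2" and upper: "\<And>c. finite {l. c l \<noteq> 0} \<Longrightarrow> integral\<^sup>L lebesgue
      (\<lambda>x. indicator D x * (norm (\<Sum>l\<in>{l. c l \<noteq> 0}. c l *\<^sub>R wgrad D (\<psi> l) x))\<^sup>2)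
        \<le> c2 * (\<Sum>l\<in>{l. c l \<noteq> 0}. (c l)\<^sup>2)"
    using riesz_basis_H10_upper_bound[OF basis] by blast
  have H10: "\<psi> l \<in> H10 D" for l using basis unfolding riesz_basis_H10_def by blast
  have "D \<in> sets lebesgue" using D(1) by simp
  then obtain C where C: "0 < C" and tail: "\<And>M. M \<ge> 1 \<Longrightarrow> AE x in lebesgue. x \<in> D \<longrightarrow>
      (\<forall>J. finite J \<longrightarrow> J \<subseteq> {M..} \<longrightarrow> (\<Sum>j\<in>J. \<bar>\<theta> j x\<bar>) \<le> C * real M powr (- \<alpha> / real DIM('a)))"
    unfolding \<theta>_def using multilevel_tail_sum_bound[OF ml _ alpha] by blast
  have "\<xi> (enum j) \<in> borel_measurable lebesgue" for j
    using ml unfolding multilevel_def by (blast dest: bij_betwE)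
  then have meas: "\<theta> j \<in> borel_measurable lebesgue" for j
    unfolding \<theta>_def by measurable
  show ?thesis
    using tail_norm_Amat_le[OF H10 upper _ meas tail] c2 C
    by (intro exI[of _ "c2 * C"]) (auto simp: mult.assoc)
qed

end
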